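(* Let $n\ge 2$, $N=n(n-1)/2$, $1\le i<j\le n$, $\phi,\alpha\in\mathbb{R}$, and let $U=R(i,j,\phi,\alpha)$. Let $\mathcal{R}=\mathcal{R}_{ij}(U)\in\mathbb{C}^{2N\times 2N}$ be the Jacobi annihilator. Then $\mathcal{R}$ agrees with the identity matrix $I_{2N}$ outside exactly $2n-2$ principal submatrices, which are determined by $$\mathcal{R}_{\tau(i,j),\tau(i,j)}=0,\qquad \mathcal{R}_{\tau(j,i),\tau(j,i)}=0,$$ and, for every $1\le r\le n$ with $r\notin\{i,j\}$, $$\begin{bmatrix}\mathcal{R}_{\tau(r,i),\tau(r,i)} & \mathcal{R}_{\tau(r,i),\tau(r,j)}\\ \mathcal{R}_{\tau(r,j),\tau(r,i)} & \mathcal{R}_{\tau(r,j),\tau(r,j)}\end{bmatrix}=\begin{bmatrix}\cos\phi & e^{-\imath\alpha}\sin\phi\\ -e^{\imath\alpha}\sin\phi & \cos\phi\end{bmatrix},$$ $$\begin{bmatrix}\mathcal{R}_{\tau(i,r),\tau(i,r)} & \mathcal{R}_{\tau(i,r),\tau(j,r)}\\ \mathcal{R}_{\tau(j,r),\tau(i,r)} & \mathcal{R}_{\tau(j,r),\tau(j,r)}\end{bmatrix}=\begin{bmatrix}\cos\phi & e^{\imath\alpha}\sin\phi\\ -e^{-\imath\alpha}\sin\phi & \cos\phi\end{bmatrix}.$$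
   Context: $\imath=\sqrt{-1}$. For $1\le i<j\le n$ and real $\phi,\alpha$, the complex plane rotation $R(i,j,\phi,\alpha)$ is the $n\times n$ matrix equal to $I_n$ except for the entries $(i,i)$ and $(j,j)$, both equal to $\cos\phi$, the entry $(i,j)$ equal to $-e^{\imath\alpha}\sin\phi$, and the entry $(j,i)$ equal to $e^{-\imath\alpha}\sin\phi$. Let $N=n(n-1)/2$. For $A=(a_{st})\in\mathbb{C}^{n\times n}$ and $2\le s,t\le n$ put $c_t=(a_{1t},a_{2t},\dots,a_{t-1,t})^T$ and $r_s=(a_{s1},\dots,a_{s,s-1})$, and define the linear map $\mathrm{ve}:\mathbb{C}^{n\times n}\to\mathbb{C}^{2N}$ by $\mathrm{ve}(A)=[c_2^T,c_3^T,\dots,c_n^T,r_2,r_3,\dots,r_n]^T$. Define $\tau(s,t)=(t-1)(t-2)/2+s$ for $1\le s<t\le n$ and $\tau(s,t)=\tau(t,s)+N$ for $1\le t<s\le n$; thus $\tau(s,t)$ is the position of $a_{st}$ in $\mathrm{ve}(A)$. Let $\nu_{ij}:\mathbb{C}^{n\times n}\to\mathbb{C}^{n\times n}$ be the linear map that sets the entries in positions $(i,j)$ and $(j,i)$ to zero. For $U=R(i,j,\phi,\alpha)$, the Jacobi annihilator $\mathcal{R}_{ij}(U)$ is the unique $2N\times 2N$ matrix with $\mathcal{R}_{ij}(U)\,\mathrm{ve}(A)=\mathrm{ve}(\nu_{ij}(U^*AU))$ for all $A\in\mathbb{C}^{n\times n}$ (well defined since $\mathrm{ve}$ is surjective and $\mathrm{ve}(\nu_{ij}(U^*AU))$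 depends only on the off-diagonal entries of $A$). *)

theory Defs
  imports Complex_Main "Jordan_Normal_Form.Matrix"
begin

text \<open>Conventions: the paper uses 1-based indices. Jordan_Normal_Form matrices and
vectors are 0-based, so the paper's entry (s,t) of a matrix A is A $$ (s-1, t-1) and
the paper's k-th entry of a vector v is v $ (k-1). All definitions below are phrased
with the paper's 1-based indices.\<close>

definition Nn :: "nat \<Rightarrow> nat" where
  "Nn n = n * (n - 1) div 2"

definition ent :: "complex mat \<Rightarrow> nat \<Rightarrow> nat \<Rightarrow> complex" where
  "ent A s t = A $$ (s - 1, t - 1)"

definition rot :: "nat \<Rightarrow> nat \<Rightarrow> nat \<Rightarrow> real \<Rightarrow> real \<Rightarrow> complex mat" where
  "rot n i j \<phi> \<alpha> = mat n n (\<lambda>(a, b). let s = a + 1; t = b + 1 in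
     if s = t then (if s = i \<or> s = j then complex_of_real (cos \<phi>) else 1)
     else if s = i \<and> t = j then - exp (\<i> * complex_of_real \<alpha>) * complex_of_real (sin \<phi>)
     else if s = j \<and> t = i then exp (- \<i> * complex_of_real \<alpha>) * complex_of_real (sin \<phi>)
     else 0)"

definition ctrans :: "complex mat \<Rightarrow> complex mat" where
  "ctrans U = mat (dim_col U) (dim_row U) (\<lambda>(a, b). cnj (U $$ (b, a)))"

text \<open>ve(A) = [c_2^T, ..., c_n^T, r_2, ..., r_n]^T with c_t = (a_{1t},...,a_{t-1,t})^T,
  r_s = (a_{s1},...,a_{s,s-1}).\<close>
definition ve :: "nat \<Rightarrow> complex mat \<Rightarrow> complex vec" where
  "ve n A = vec_of_list
     (concat (map (\<lambda>t. map (\<lambda>s. ent A s t) [1..<t]) [2..<n+1]) @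
      concat (map (\<lambda>s. map (\<lambda>t. ent A s t) [1..<s]) [2..<n+1]))"

text \<open>tau(s,t): 1-based position of a_{st} in ve(A).\<close>
definition tau :: "nat \<Rightarrow> nat \<Rightarrow> nat \<Rightarrow> nat" where
  "tau n s t = (if s < t then (t - 1) * (t - 2) div 2 + s
                else ((s - 1) * (s - 2) div 2 + t) + Nn n)"

definition nu :: "nat \<Rightarrow> nat \<Rightarrow> complex mat \<Rightarrow> complex mat" where
  "nu i j A = mat (dim_row A) (dim_col A) (\<lambda>(a, b).
     if (a + 1 = i \<and> b + 1 = j) \<or> (a + 1 = j \<and> b + 1 = i) then 0 else A $$ (a, b))"

definition jacobi_annihilator :: "nat \<Rightarrow> nat \<Rightarrow> nat \<Rightarrow> complex mat \<Rightarrow> complex mat" where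
  "jacobi_annihilator n i j U = (THE M. M \<in> carrier_mat (2 * Nn n) (2 * Nn n) \<and>
     (\<forall>A \<in> carrier_mat n n. M *\<^sub>v ve n A = ve n (nu i j (ctrans U * A * U))))"

end

theory Submission
  imports Defs "HOL-Library.Disjoint_Sets"
begin

text \<open>Entry (s,t) of U^* A U is the sum over all a, b of cnj(U_as) a_ab U_bt. Two distinct
columns of a plane rotation have disjoint supports unless they are the columns i and j, so in
every entry kept by nu the diagonal of A contributes nothing, and the Jacobi annihilator has
the entry cnj(U_as) U_bt in row tau(s,t) and column tau(a,b) (zero in the rows tau(i,j) and
tau(j,i)). As U agrees with the identity outside the rows and columns i and j, this is the
Kronecker delta unless (s,t) and (a,b) lie in a common block {(r,i),(r,j)}, {(i,r),(j,r)},
{(i,j)} or {(j,i)}, and inside the blocks the entries of U give the stated 2x2 matrices.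
Since tau maps the off-diagonal positions bijectively onto {1..2N}, the count and the
disjointness of the blocks carry over to their images.\<close>

lemma Nn_Suc: "Nn (Suc m) = Nn m + m"
proof -
  have "Suc m * m = m * (m - 1) + 2 * m" by (cases m) (auto simp: algebra_simps)
  then show ?thesis unfolding Nn_def by simp
qed

lemma Nn_mono: "a \<le> b \<Longrightarrow> Nn a \<le> Nn b"
  by (induction b) (auto simp: Nn_Suc le_Suc_eq)

lemma tau_upper: "s < t \<Longrightarrow> tau n s t = Nn (t - 1) + s"
  by (simp add: tau_def Nn_def numeral_2_eq_2)

lemma tau_lower: "t < s \<Longrightarrow> tau n s t = Nn (s - 1) + t + Nn n"
  by (simp add: tau_def Nn_def numeral_2_eq_2)

lemma bij_betw_upper_index:
  "bij_betw (\<lambda>(s, t). Nn (t - 1) + s) {(s, t). 1 \<le> s \<and> s < t \<and> t \<le> m} {1..Nn m}"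
proof (induction m)
  case 0
  show ?case by (simp add: bij_betw_def inj_on_def Nn_def)
next
  case (Suc m)
  have pairs: "{(s, t). 1 \<le> s \<and> s < t \<and> t \<le> Suc m}
      = {(s, t). 1 \<le> s \<and> s < t \<and> t \<le> m} \<union> (\<lambda>s. (s, Suc m)) ` {1..m}"
    by (auto simp: le_Suc_eq)
  have range: "{1..Nn (Suc m)} = {1..Nn m} \<union> {Nn m + 1..Nn m + m}"
    by (auto simp: Nn_Suc)
  have "(\<lambda>s. Nn m + s) ` {1..m} = {Nn m + 1..Nn m + m}"
    by (simp add: add.commute)
  then have "bij_betw (\<lambda>(s, t). Nn (t - 1) + s) ((\<lambda>s. (s, Suc m)) ` {1..m}) {Nn m + 1..Nn m + m}"
    by (intro bij_betw_imageI) (auto simp: inj_on_def image_image)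
  then show ?case
    unfolding pairs range by (intro bij_betw_combine Suc.IH) auto
qed

definition offdiag :: "nat \<Rightarrow> (nat \<times> nat) set" where
  "offdiag n = {(s, t). s \<in> {1..n} \<and> t \<in> {1..n} \<and> s \<noteq> t}"

lemma bij_betw_tau: "bij_betw (case_prod (tau n)) (offdiag n) {1..2 * Nn n}"
proof -
  let ?upper = "{(s, t). 1 \<le> s \<and> s < t \<and> t \<le> n}"
  have split: "offdiag n = ?upper \<union> prod.swap ` ?upper"
    by (auto simp: offdiag_def image_iff nat_neq_iff)
  have range: "{1..2 * Nn n} = {1..Nn n} \<union> {Nn n + 1..2 * Nn n}"
    by auto
  have upper: "bij_betw (case_prod (tau n)) ?upper {1..Nn n}"
    using bij_betw_upper_index by (rule bij_betw_cong[THEN iffD1, rotated]) (auto simp: tau_upper)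
  have "bij_betw prod.swap (prod.swap ` ?upper) ?upper"
    by (rule bij_betw_imageI) (auto simp: inj_on_def image_image)
  moreover have "bij_betw (\<lambda>p. p + Nn n) {1..Nn n} {Nn n + 1..2 * Nn n}"
    by (rule bij_betw_imageI) (auto simp: image_add_atLeastAtMost)
  ultimately have "bij_betw ((\<lambda>p. p + Nn n) \<circ> (\<lambda>(s, t). Nn (t - 1) + s) \<circ> prod.swap)
      (prod.swap ` ?upper) {Nn n + 1..2 * Nn n}"
    using bij_betw_upper_index by (intro bij_betw_trans)
  then have lower: "bij_betw (case_prod (tau n)) (prod.swap ` ?upper) {Nn n + 1..2 * Nn n}"
    by (rule bij_betw_cong[THEN iffD1, rotated]) (auto simp: tau_lower)
  show ?thesis
    unfolding split range by (rule bij_betw_combine[OF upper lower]) auto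
qed

lemma finite_offdiag [simp]: "finite (offdiag n)"
  using bij_betw_finite[OF bij_betw_tau] by simp

definition upper_entries :: "(nat \<Rightarrow> nat \<Rightarrow> 'a) \<Rightarrow> nat \<Rightarrow> 'a list" where
  "upper_entries f m = concat (map (\<lambda>t. map (\<lambda>s. f s t) [1..<t]) [2..<m + 1])"

lemma upper_entries_Suc:
  "upper_entries f (Suc m) = upper_entries f m @ map (\<lambda>s. f s (Suc m)) [1..<Suc m]"
  by (cases m) (auto simp: upper_entries_def)

lemma length_upper_entries: "length (upper_entries f m) = Nn m"
  by (induction m) (auto simp: upper_entries_Suc Nn_Suc, simp add: upper_entries_def Nn_def)

lemma nth_upper_entries:
  "1 \<le> s \<Longrightarrow> s < t \<Longrightarrow> t \<le> m \<Longrightarrow> upper_entries f m ! (Nn (t - 1) + s - 1) = f s t"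
proof (induction m)
  case 0
  then show ?case by simp
next
  case (Suc m)
  show ?case
  proof (cases "t = Suc m")
    case True
    then have "Nn (t - 1) + s - 1 = length (upper_entries f m) + (s - 1)"
      using Suc.prems by (simp add: length_upper_entries)
    moreover have "map (\<lambda>s. f s (Suc m)) [1..<Suc m] ! (s - 1) = f s t"
      using Suc.prems True by (simp del: upt_Suc)
    ultimately show ?thesis
      by (simp only: upper_entries_Suc nth_append_length_plus)
  next
    case False
    then have "t \<le> m" using Suc.prems by simp
    have "Nn (t - 1) + s - 1 < Nn t" using Suc.prems Nn_Suc[of "t - 1"] by simp
    also have "\<dots> \<le> Nn m" using \<open>t \<le> m\<close> by (rule Nn_mono)
    finally show ?thesis using Suc.IH[OF Suc.prems(1,2) \<open>t \<le> m\<close>]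
      by (simp add: upper_entries_Suc nth_append length_upper_entries)
  qed
qed

lemma ve_upper_entries: "ve n A = vec_of_list (upper_entries (ent A) n @ upper_entries (\<lambda>s t. ent A t s) n)"
  unfolding ve_def upper_entries_def by simp

lemma dim_ve [simp]: "dim_vec (ve n A) = 2 * Nn n"
  by (simp add: ve_upper_entries length_upper_entries)

lemma ve_tau:
  assumes "(s, t) \<in> offdiag n"
  shows "ve n A $ (tau n s t - 1) = ent A s t"
proof (cases "s < t")
  case True
  have "Nn (t - 1) + s - 1 < Nn n"
    using assms True Nn_Suc[of "t - 1"] Nn_mono[of t n] by (simp add: offdiag_def; linarith)
  then show ?thesis
    using assms True nth_upper_entries[of s t n "ent A"]
    by (simp add: offdiag_def tau_upper ve_upper_entries vec_of_list_index
        nth_append length_upper_entries)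
next
  case False
  then have "t < s" using assms by (simp add: offdiag_def)
  then have "tau n s t - 1 = length (upper_entries (ent A) n) + (Nn (s - 1) + t - 1)"
    using assms by (simp add: tau_lower offdiag_def length_upper_entries)
  then have "ve n A $ (tau n s t - 1) = upper_entries (\<lambda>s t. ent A t s) n ! (Nn (s - 1) + t - 1)"
    by (simp only: ve_upper_entries vec_of_list_index nth_append_length_plus)
  then show ?thesis
    using assms \<open>t < s\<close> nth_upper_entries[of t s n "\<lambda>s t. ent A t s"] by (simp add: offdiag_def)
qed

definition tau_inv :: "nat \<Rightarrow> nat \<Rightarrow> nat \<times> nat" where
  "tau_inv n = the_inv_into (offdiag n) (case_prod (tau n))"

lemma bij_betw_tau_inv: "bij_betw (tau_inv n) {1..2 * Nn n} (offdiag n)"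
  unfolding tau_inv_def by (rule bij_betw_the_inv_into[OF bij_betw_tau])

lemma tau_inv_tau: "x \<in> offdiag n \<Longrightarrow> tau_inv n (case_prod (tau n) x) = x"
  unfolding tau_inv_def by (rule the_inv_into_f_f[OF bij_betw_imp_inj_on[OF bij_betw_tau]])

lemma tau_tau_inv: "p \<in> {1..2 * Nn n} \<Longrightarrow> case_prod (tau n) (tau_inv n p) = p"
  unfolding tau_inv_def by (rule f_the_inv_into_f_bij_betw[OF bij_betw_tau])

lemma bij_betw_tau_inv_Suc: "bij_betw (\<lambda>p. tau_inv n (Suc p)) {..<2 * Nn n} (offdiag n)"
proof -
  have "bij_betw Suc {..<2 * Nn n} {1..2 * Nn n}"
    by (simp add: bij_betw_def image_Suc_lessThan)
  then show ?thesis
    using bij_betw_tau_inv by (rule bij_betw_trans[unfolded comp_def])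
qed

lemma ve_nth: "p < 2 * Nn n \<Longrightarrow> ve n A $ p = case_prod (ent A) (tau_inv n (Suc p))"
  using ve_tau[of "fst (tau_inv n (Suc p))" "snd (tau_inv n (Suc p))" n A]
    bij_betw_apply[OF bij_betw_tau_inv, of "Suc p" n] tau_tau_inv[of "Suc p" n]
  by (simp add: case_prod_beta)

lemma ent_ctrans_mult_mult:
  assumes "U \<in> carrier_mat n n" "A \<in> carrier_mat n n" "s \<in> {1..n}" "t \<in> {1..n}"
  shows "ent (ctrans U * A * U) s t
    = (\<Sum>(a, b) \<in> {1..n} \<times> {1..n}. cnj (ent U a s) * ent A a b * ent U b t)"
proof -
  have "s - 1 < n" "t - 1 < n" using assms(3,4) by auto
  then have "ent (ctrans U * A * U) s t
      = (\<Sum>b<n. (\<Sum>a<n. cnj (U $$ (a, s - 1)) * A $$ (a, b)) * U $$ (b, t - 1))"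
    using assms(1,2) by (simp add: ent_def ctrans_def scalar_prod_def atLeast0LessThan)
  also have "\<dots> = (\<Sum>b \<in> {1..n}. \<Sum>a \<in> {1..n}. cnj (ent U a s) * ent A a b * ent U b t)"
    by (simp add: ent_def sum_distrib_right sum.atLeast1_atMost_eq)
  also have "\<dots> = (\<Sum>(a, b) \<in> {1..n} \<times> {1..n}. cnj (ent U a s) * ent A a b * ent U b t)"
    by (subst sum.swap) (simp add: sum.cartesian_product)
  finally show ?thesis .
qed

text \<open>The coefficient of a_ab in entry (s,t) of U^* A U, unless nu erases that entry.\<close>

definition jacobi_coeff :: "nat \<Rightarrow> nat \<Rightarrow> complex mat \<Rightarrow> nat \<times> nat \<Rightarrow> nat \<times> nat \<Rightarrow> complex" where
  "jacobi_coeff i j U = (\<lambda>(s, t) (a, b). if {s, t} = {i, j} then 0 else cnj (ent U a s) * ent U b t)"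

text \<open>This is the hypothesis under which the diagonal of A does not influence
  ve(nu(U^* A U)), i.e. under which the Jacobi annihilator exists.\<close>

definition disjoint_column_supports :: "nat \<Rightarrow> nat \<Rightarrow> nat \<Rightarrow> complex mat \<Rightarrow> bool" where
  "disjoint_column_supports n i j U \<longleftrightarrow>
     (\<forall>a \<in> {1..n}. \<forall>(s, t) \<in> offdiag n. {s, t} \<noteq> {i, j} \<longrightarrow> ent U a s = 0 \<or> ent U a t = 0)"

lemma ent_nu_ctrans_mult_mult:
  assumes U: "U \<in> carrier_mat n n" and A: "A \<in> carrier_mat n n" and st: "(s, t) \<in> offdiag n"
    and cols: "disjoint_column_supports n i j U"
  shows "ent (nu i j (ctrans U * A * U)) s t
    = (\<Sum>y \<in> offdiag n. jacobi_coeff i j U (s, t) y * case_prod (ent A) y)"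
proof (cases "{s, t} = {i, j}")
  case True
  have "ent (nu i j (ctrans U * A * U)) s t = 0"
    using True st U by (auto simp: ent_def nu_def offdiag_def ctrans_def doubleton_eq_iff)
  then show ?thesis using True by (simp add: jacobi_coeff_def)
next
  case False
  let ?f = "\<lambda>(a, b). cnj (ent U a s) * ent A a b * ent U b t"
  have grid: "{1..n} \<times> {1..n} = offdiag n \<union> (\<lambda>a. (a, a)) ` {1..n}"
    by (auto simp: offdiag_def)
  have "sum ?f ((\<lambda>a. (a, a)) ` {1..n}) = (\<Sum>a \<in> {1..n}. cnj (ent U a s) * ent U a t * ent A a a)"
    by (simp add: sum.reindex inj_on_def algebra_simps)
  also have "\<dots> = 0"
  proof (intro sum.neutral ballI)
    fix a
    assume "a \<in> {1..n}"
    then have "ent U a s = 0 \<or> ent U a t = 0"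
      using cols st False unfolding disjoint_column_supports_def by fast
    then show "cnj (ent U a s) * ent U a t * ent A a a = 0" by auto
  qed
  finally have diagonal: "sum ?f ((\<lambda>a. (a, a)) ` {1..n}) = 0" .
  have "ent (nu i j (ctrans U * A * U)) s t = ent (ctrans U * A * U) s t"
    using False st U by (auto simp: ent_def nu_def offdiag_def ctrans_def doubleton_eq_iff)
  also have "\<dots> = sum ?f (offdiag n \<union> (\<lambda>a. (a, a)) ` {1..n})"
    unfolding grid[symmetric] using st by (intro ent_ctrans_mult_mult[OF U A]) (auto simp: offdiag_def)
  also have "\<dots> = sum ?f (offdiag n) + sum ?f ((\<lambda>a. (a, a)) ` {1..n})"
    by (rule sum.union_disjoint) (simp, simp, force simp: offdiag_def)
  also have "\<dots> = sum ?f (offdiag n)"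
    by (simp only: diagonal add_0_right)
  also have "\<dots> = (\<Sum>y \<in> offdiag n. jacobi_coeff i j U (s, t) y * case_prod (ent A) y)"
    using False by (intro sum.cong) (auto simp: jacobi_coeff_def)
  finally show ?thesis .
qed

definition jacobi_mat :: "nat \<Rightarrow> nat \<Rightarrow> nat \<Rightarrow> complex mat \<Rightarrow> complex mat" where
  "jacobi_mat n i j U = mat (2 * Nn n) (2 * Nn n)
     (\<lambda>(p, q). jacobi_coeff i j U (tau_inv n (Suc p)) (tau_inv n (Suc q)))"

lemma jacobi_mat_carrier: "jacobi_mat n i j U \<in> carrier_mat (2 * Nn n) (2 * Nn n)"
  by (simp add: jacobi_mat_def)

lemma jacobi_mat_mult_ve:
  assumes U: "U \<in> carrier_mat n n" and A: "A \<in> carrier_mat n n"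
    and cols: "disjoint_column_supports n i j U"
  shows "jacobi_mat n i j U *\<^sub>v ve n A = ve n (nu i j (ctrans U * A * U))"
proof (rule eq_vecI)
  fix p
  assume "p < dim_vec (ve n (nu i j (ctrans U * A * U)))"
  then have p: "p < 2 * Nn n" by simp
  define x where "x = tau_inv n (Suc p)"
  have x: "x \<in> offdiag n"
    unfolding x_def using p by (intro bij_betw_apply[OF bij_betw_tau_inv_Suc]) simp
  have "(jacobi_mat n i j U *\<^sub>v ve n A) $ p
      = (\<Sum>q<2 * Nn n. jacobi_coeff i j U x (tau_inv n (Suc q)) * case_prod (ent A) (tau_inv n (Suc q)))"
    using p by (simp add: jacobi_mat_def scalar_prod_def atLeast0LessThan ve_nth x_def)
  also have "\<dots> = (\<Sum>y \<in> offdiag n. jacobi_coeff i j U x y * case_prod (ent A) y)"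
    by (rule sum.reindex_bij_betw[OF bij_betw_tau_inv_Suc])
  also have "\<dots> = case_prod (ent (nu i j (ctrans U * A * U))) x"
  proof -
    obtain s t where st: "x = (s, t)" by fastforce
    have "(s, t) \<in> offdiag n" using x st by simp
    then show ?thesis
      unfolding st prod.case by (rule ent_nu_ctrans_mult_mult[OF U A _ cols, symmetric])
  qed
  also have "\<dots> = ve n (nu i j (ctrans U * A * U)) $ p"
    using p by (simp add: ve_nth x_def)
  finally show "(jacobi_mat n i j U *\<^sub>v ve n A) $ p = ve n (nu i j (ctrans U * A * U)) $ p" .
qed (simp add: jacobi_mat_def)

lemma ve_surj:
  assumes "v \<in> carrier_vec (2 * Nn n)"
  shows "\<exists>A \<in> carrier_mat n n. ve n A = v"
proof
  define A where "A = mat n n (\<lambda>(a, b). v $ (tau n (Suc a) (Suc b) - 1))"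
  show "A \<in> carrier_mat n n" by (simp add: A_def)
  show "ve n A = v"
  proof (rule eq_vecI)
    fix p
    assume "p < dim_vec v"
    then have p: "p < 2 * Nn n" using assms by simp
    obtain s t where st: "tau_inv n (Suc p) = (s, t)" by fastforce
    have "(s, t) \<in> offdiag n"
      using bij_betw_apply[OF bij_betw_tau_inv_Suc] p st by fastforce
    moreover have "tau n s t = Suc p"
      using tau_tau_inv[of "Suc p" n] p st by simp
    ultimately show "ve n A $ p = v $ p"
      using p st by (auto simp: ve_nth A_def ent_def offdiag_def)
  qed (use assms in simp)
qed

lemma mat_eq_on_ve:
  assumes "M \<in> carrier_mat (2 * Nn n) (2 * Nn n)" "M' \<in> carrier_mat (2 * Nn n) (2 * Nn n)"
    and "\<And>A. A \<in> carrier_mat n n \<Longrightarrow> M *\<^sub>v ve n A = M' *\<^sub>v ve n A"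
  shows "M = M'"
proof (rule eq_matI)
  fix p q
  assume pq: "p < dim_row M'" "q < dim_col M'"
  obtain A where A: "A \<in> carrier_mat n n" "ve n A = unit_vec (2 * Nn n) q"
    using ve_surj[of "unit_vec (2 * Nn n) q" n] by auto
  have "M $$ (p, q) = (M *\<^sub>v unit_vec (2 * Nn n) q) $ p"
    using pq assms(1,2) by simp
  also have "\<dots> = (M' *\<^sub>v unit_vec (2 * Nn n) q) $ p"
    using assms(3)[OF A(1)] A(2) by simp
  also have "\<dots> = M' $$ (p, q)"
    using pq assms(2) by simp
  finally show "M $$ (p, q) = M' $$ (p, q)" .
qed (use assms in auto)

lemma jacobi_annihilator_eq_jacobi_mat:
  assumes U: "U \<in> carrier_mat n n"
    and cols: "disjoint_column_supports n i j U"
  shows "jacobi_annihilator n i j U = jacobi_mat n i j U"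
  unfolding jacobi_annihilator_def
proof (rule the_equality)
  show "jacobi_mat n i j U \<in> carrier_mat (2 * Nn n) (2 * Nn n) \<and>
      (\<forall>A \<in> carrier_mat n n. jacobi_mat n i j U *\<^sub>v ve n A = ve n (nu i j (ctrans U * A * U)))"
    using jacobi_mat_mult_ve[OF U _ cols] by (simp add: jacobi_mat_carrier)
next
  fix M
  assume "M \<in> carrier_mat (2 * Nn n) (2 * Nn n) \<and>
      (\<forall>A \<in> carrier_mat n n. M *\<^sub>v ve n A = ve n (nu i j (ctrans U * A * U)))"
  then show "M = jacobi_mat n i j U"
    using jacobi_mat_mult_ve[OF U _ cols] by (intro mat_eq_on_ve[of M n] jacobi_mat_carrier) auto
qed

lemma ent_jacobi_annihilator:
  assumes U: "U \<in> carrier_mat n n"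
    and cols: "disjoint_column_supports n i j U"
    and "x \<in> offdiag n" "y \<in> offdiag n"
  shows "ent (jacobi_annihilator n i j U) (case_prod (tau n) x) (case_prod (tau n) y)
    = jacobi_coeff i j U x y"
proof -
  have R: "jacobi_annihilator n i j U = jacobi_mat n i j U"
    using U cols by (rule jacobi_annihilator_eq_jacobi_mat)
  have "ent (jacobi_mat n i j U) p q = jacobi_coeff i j U (tau_inv n p) (tau_inv n q)"
    if "p \<in> {1..2 * Nn n}" "q \<in> {1..2 * Nn n}" for p q
  proof -
    have "p - 1 < 2 * Nn n" "q - 1 < 2 * Nn n" "Suc (p - 1) = p" "Suc (q - 1) = q"
      using that by auto
    then show ?thesis by (simp add: jacobi_mat_def ent_def)
  qed
  moreover have "case_prod (tau n) x \<in> {1..2 * Nn n}" "case_prod (tau n) y \<in> {1..2 * Nn n}"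
    using bij_betw_apply[OF bij_betw_tau] assms(3,4) by blast+
  ultimately show ?thesis
    unfolding R using assms(3,4) by (simp add: tau_inv_tau)
qed

lemma rot_carrier: "rot n i j \<phi> \<alpha> \<in> carrier_mat n n"
  by (simp add: rot_def)

lemma ent_rot:
  assumes "a \<in> {1..n}" "b \<in> {1..n}"
  shows "ent (rot n i j \<phi> \<alpha>) a b =
    (if a = b then (if a = i \<or> a = j then complex_of_real (cos \<phi>) else 1)
     else if a = i \<and> b = j then - exp (\<i> * complex_of_real \<alpha>) * complex_of_real (sin \<phi>)
     else if a = j \<and> b = i then exp (- \<i> * complex_of_real \<alpha>) * complex_of_real (sin \<phi>)
     else 0)"
proof -
  have "a - 1 < n" "b - 1 < n" "Suc (a - 1) = a" "Suc (b - 1) = b" using assms by auto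
  then show ?thesis by (simp add: ent_def rot_def)
qed

lemma ent_rot_outside_plane:
  "a \<in> {1..n} \<Longrightarrow> b \<in> {1..n} \<Longrightarrow> a \<noteq> b \<Longrightarrow> {a, b} \<noteq> {i, j}
    \<Longrightarrow> ent (rot n i j \<phi> \<alpha>) a b = 0"
  by (auto simp: ent_rot doubleton_eq_iff)

lemma ent_rot_diag_outside_plane:
  "a \<in> {1..n} \<Longrightarrow> a \<notin> {i, j} \<Longrightarrow> ent (rot n i j \<phi> \<alpha>) a a = 1"
  by (simp add: ent_rot)

lemma disjoint_column_supports_rot: "disjoint_column_supports n i j (rot n i j \<phi> \<alpha>)"
proof -
  have "ent (rot n i j \<phi> \<alpha>) a s = 0 \<or> ent (rot n i j \<phi> \<alpha>) a t = 0"
    if a: "a \<in> {1..n}" and st: "(s, t) \<in> offdiag n" "{s, t} \<noteq> {i, j}" for a s t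
  proof (cases "a = s \<or> {a, s} = {i, j}")
    case True
    then have "a \<noteq> t" "{a, t} \<noteq> {i, j}"
      using st by (auto simp: offdiag_def doubleton_eq_iff)
    then show ?thesis using a st(1) by (simp add: ent_rot_outside_plane offdiag_def)
  next
    case False
    then show ?thesis using a st(1) by (simp add: ent_rot_outside_plane offdiag_def)
  qed
  then show ?thesis unfolding disjoint_column_supports_def by blast
qed

lemma cnj_exp_i_times:
  "cnj (exp (\<i> * complex_of_real \<alpha>)) = exp (- (\<i> * complex_of_real \<alpha>))"
  "cnj (exp (- (\<i> * complex_of_real \<alpha>))) = exp (\<i> * complex_of_real \<alpha>)"
  using cis_cnj[of \<alpha>] cis_cnj[of "- \<alpha>"] by (simp_all add: cis_conv_exp)

definition jacobi_blocks :: "nat \<Rightarrow> nat \<Rightarrow> nat \<Rightarrow> (nat \<times> nat) set set" where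
  "jacobi_blocks n i j = {{(i, j)}, {(j, i)}}
     \<union> {{(r, i), (r, j)} | r. r \<in> {1..n} - {i, j}}
     \<union> {{(i, r), (j, r)} | r. r \<in> {1..n} - {i, j}}"

lemma jacobi_blocks_subset_offdiag:
  "1 \<le> i \<Longrightarrow> i < j \<Longrightarrow> j \<le> n \<Longrightarrow> \<Union>(jacobi_blocks n i j) \<subseteq> offdiag n"
  by (auto simp: jacobi_blocks_def offdiag_def)

lemma pairwise_disjnt_jacobi_blocks: "i \<noteq> j \<Longrightarrow> pairwise disjnt (jacobi_blocks n i j)"
  by (auto simp: jacobi_blocks_def pairwise_def disjnt_def)

lemma card_jacobi_blocks:
  assumes "1 \<le> i" "i < j" "j \<le> n"
  shows "card (jacobi_blocks n i j) = 2 * n - 2"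
proof -
  define S where "S = {1..n} - {i, j}"
  have blocks: "jacobi_blocks n i j = {{(i, j)}, {(j, i)}}
      \<union> ((\<lambda>r. {(r, i), (r, j)}) ` S \<union> (\<lambda>r. {(i, r), (j, r)}) ` S)"
    by (auto simp: jacobi_blocks_def S_def)
  have "card S = n - 2"
    using assms unfolding S_def by (subst card_Diff_subset) auto
  moreover have "inj_on (\<lambda>r. {(r, i), (r, j)}) S" "inj_on (\<lambda>r. {(i, r), (j, r)}) S"
    by (auto simp: inj_on_def doubleton_eq_iff)
  moreover have "(\<lambda>r. {(r, i), (r, j)}) ` S \<inter> (\<lambda>r. {(i, r), (j, r)}) ` S = {}"
    using assms by (auto simp: S_def doubleton_eq_iff)
  moreover have "{{(i, j)}, {(j, i)}} \<inter> ((\<lambda>r. {(r, i), (r, j)}) ` S \<union> (\<lambda>r. {(i, r), (j, r)}) ` S) = {}"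
    using assms by (auto simp: S_def doubleton_eq_iff)
  ultimately show ?thesis
    using assms unfolding blocks by (simp add: card_Un_disjoint card_image S_def)
qed

lemma jacobi_coeff_rot_outside_blocks:
  assumes "x \<in> offdiag n" "y \<in> offdiag n"
    and outside: "\<forall>P \<in> jacobi_blocks n i j. (x, y) \<notin> P \<times> P"
  shows "jacobi_coeff i j (rot n i j \<phi> \<alpha>) x y = (if x = y then 1 else 0)"
proof -
  let ?U = "rot n i j \<phi> \<alpha>"
  obtain s t a b where xy: "x = (s, t)" "y = (a, b)" by fastforce
  have range: "s \<in> {1..n}" "t \<in> {1..n}" "a \<in> {1..n}" "b \<in> {1..n}" "s \<noteq> t"
    using assms(1,2) by (auto simp: xy offdiag_def)
  consider "{s, t} = {i, j}" | "s \<notin> {i, j}" "t \<in> {i, j}" | "s \<in> {i, j}" "t \<notin> {i, j}"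
    | "s \<notin> {i, j}" "t \<notin> {i, j}"
    using range(5) by (auto simp: doubleton_eq_iff)
  then show ?thesis
  proof cases
    case 1
    then have "{x} \<in> jacobi_blocks n i j" by (auto simp: jacobi_blocks_def xy doubleton_eq_iff)
    then show ?thesis using outside 1 by (auto simp: jacobi_coeff_def xy)
  next
    case 2
    then have "{(s, i), (s, j)} \<in> jacobi_blocks n i j"
      using range(1) by (auto simp: jacobi_blocks_def)
    then have "x \<noteq> y" "a \<noteq> s \<or> b \<notin> {i, j}"
      using outside 2 by (auto simp: xy)
    moreover have "ent ?U a s = 0" if "a \<noteq> s"
      using that 2 range by (intro ent_rot_outside_plane) (auto simp: doubleton_eq_iff)
    moreover have "ent ?U b t = 0" if "b \<notin> {i, j}"
      using that 2 range by (intro ent_rot_outside_plane) (auto simp: doubleton_eq_iff)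
    ultimately show ?thesis using 2 by (auto simp: jacobi_coeff_def xy)
  next
    case 3
    then have "{(i, t), (j, t)} \<in> jacobi_blocks n i j"
      using range(2) by (auto simp: jacobi_blocks_def)
    then have "x \<noteq> y" "b \<noteq> t \<or> a \<notin> {i, j}"
      using outside 3 by (auto simp: xy)
    moreover have "ent ?U b t = 0" if "b \<noteq> t"
      using that 3 range by (intro ent_rot_outside_plane) (auto simp: doubleton_eq_iff)
    moreover have "ent ?U a s = 0" if "a \<notin> {i, j}"
      using that 3 range by (intro ent_rot_outside_plane) (auto simp: doubleton_eq_iff)
    ultimately show ?thesis using 3 by (auto simp: jacobi_coeff_def xy)
  next
    case 4
    have "ent ?U a s = (if a = s then 1 else 0)" "ent ?U b t = (if b = t then 1 else 0)"
      using 4 range by (auto simp: ent_rot_diag_outside_plane doubleton_eq_iff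
          intro!: ent_rot_outside_plane)
    then show ?thesis using 4 by (auto simp: jacobi_coeff_def xy doubleton_eq_iff)
  qed
qed

lemma jacobi_coeff_pivot: "jacobi_coeff i j U (i, j) y = 0" "jacobi_coeff i j U (j, i) y = 0"
  by (auto simp: jacobi_coeff_def insert_commute)

lemma jacobi_coeff_rot_row_pair:
  assumes "1 \<le> i" "i < j" "j \<le> n" "r \<in> {1..n} - {i, j}"
  shows "jacobi_coeff i j (rot n i j \<phi> \<alpha>) (r, i) (r, i) = complex_of_real (cos \<phi>)"
    and "jacobi_coeff i j (rot n i j \<phi> \<alpha>) (r, i) (r, j) = exp (- \<i> * complex_of_real \<alpha>) * complex_of_real (sin \<phi>)"
    and "jacobi_coeff i j (rot n i j \<phi> \<alpha>) (r, j) (r, i) = - exp (\<i> * complex_of_real \<alpha>) * complex_of_real (sin \<phi>)"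
    and "jacobi_coeff i j (rot n i j \<phi> \<alpha>) (r, j) (r, j) = complex_of_real (cos \<phi>)"
  using assms by (auto simp: jacobi_coeff_def ent_rot doubleton_eq_iff)

lemma jacobi_coeff_rot_column_pair:
  assumes "1 \<le> i" "i < j" "j \<le> n" "r \<in> {1..n} - {i, j}"
  shows "jacobi_coeff i j (rot n i j \<phi> \<alpha>) (i, r) (i, r) = complex_of_real (cos \<phi>)"
    and "jacobi_coeff i j (rot n i j \<phi> \<alpha>) (i, r) (j, r) = exp (\<i> * complex_of_real \<alpha>) * complex_of_real (sin \<phi>)"
    and "jacobi_coeff i j (rot n i j \<phi> \<alpha>) (j, r) (i, r) = - exp (- \<i> * complex_of_real \<alpha>) * complex_of_real (sin \<phi>)"
    and "jacobi_coeff i j (rot n i j \<phi> \<alpha>) (j, r) (j, r) = complex_of_real (cos \<phi>)"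
  using assms by (auto simp: jacobi_coeff_def ent_rot doubleton_eq_iff cnj_exp_i_times)

lemma jacobi_annihilator_rot_eq_jacobi_mat:
  "jacobi_annihilator n i j (rot n i j \<phi> \<alpha>) = jacobi_mat n i j (rot n i j \<phi> \<alpha>)"
  by (intro jacobi_annihilator_eq_jacobi_mat rot_carrier disjoint_column_supports_rot)

lemma ent_jacobi_annihilator_rot:
  assumes "x \<in> offdiag n" "y \<in> offdiag n"
  shows "ent (jacobi_annihilator n i j (rot n i j \<phi> \<alpha>)) (case_prod (tau n) x) (case_prod (tau n) y)
    = jacobi_coeff i j (rot n i j \<phi> \<alpha>) x y"
  using assms by (intro ent_jacobi_annihilator rot_carrier disjoint_column_supports_rot)

lemma ent_jacobi_annihilator_rot_outside_blocks:
  assumes "a \<in> {1..2 * Nn n}" "c \<in> {1..2 * Nn n}"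
    and outside: "\<forall>b \<in> (`) (case_prod (tau n)) ` jacobi_blocks n i j. (a, c) \<notin> b \<times> b"
  shows "ent (jacobi_annihilator n i j (rot n i j \<phi> \<alpha>)) a c = (if a = c then 1 else 0)"
proof -
  have "a \<in> case_prod (tau n) ` offdiag n" "c \<in> case_prod (tau n) ` offdiag n"
    using assms(1,2) bij_betw_tau[of n] by (simp_all add: bij_betw_def)
  then obtain x y where xy: "x \<in> offdiag n" "y \<in> offdiag n"
    "a = case_prod (tau n) x" "c = case_prod (tau n) y"
    by blast
  have "\<forall>P \<in> jacobi_blocks n i j. (x, y) \<notin> P \<times> P"
    using outside xy by blast
  moreover have "(a = c) = (x = y)"
    using xy inj_onD[OF bij_betw_imp_inj_on[OF bij_betw_tau]] by metis
  ultimately show ?thesis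
    using xy by (simp add: ent_jacobi_annihilator_rot jacobi_coeff_rot_outside_blocks)
qed

theorem theorem2p4:
  fixes n i j :: nat and \<phi> \<alpha> :: real
  assumes "n \<ge> 2" and "1 \<le> i" and "i < j" and "j \<le> n"
  defines "U \<equiv> rot n i j \<phi> \<alpha>"
  defines "R \<equiv> jacobi_annihilator n i j U"
  defines "B \<equiv> {{tau n i j}, {tau n j i}}
               \<union> {{tau n r i, tau n r j} | r. r \<in> {1..n} - {i, j}}
               \<union> {{tau n i r, tau n j r} | r. r \<in> {1..n} - {i, j}}"
  shows "R \<in> carrier_mat (2 * Nn n) (2 * Nn n)
    \<and> card B = 2 * n - 2
    \<and> pairwise disjnt B
    \<and> (\<forall>b \<in> B. b \<subseteq> {1..2 * Nn n})
    \<and> (\<forall>a \<in> {1..2 * Nn n}. \<forall>c \<in> {1..2 * Nn n}.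
         (\<forall>b \<in> B. (a, c) \<notin> b \<times> b) \<longrightarrow> ent R a c = (if a = c then 1 else 0))
    \<and> ent R (tau n i j) (tau n i j) = 0
    \<and> ent R (tau n j i) (tau n j i) = 0
    \<and> (\<forall>r \<in> {1..n} - {i, j}.
         ent R (tau n r i) (tau n r i) = complex_of_real (cos \<phi>)
       \<and> ent R (tau n r i) (tau n r j) = exp (- \<i> * complex_of_real \<alpha>) * complex_of_real (sin \<phi>)
       \<and> ent R (tau n r j) (tau n r i) = - exp (\<i> * complex_of_real \<alpha>) * complex_of_real (sin \<phi>)
       \<and> ent R (tau n r j) (tau n r j) = complex_of_real (cos \<phi>)
       \<and> ent R (tau n i r) (tau n i r) = complex_of_real (cos \<phi>)
       \<and> ent R (tau n i r) (tau n j r) = exp (\<i> * complex_of_real \<alpha>) * complex_of_real (sin \<phi>)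
       \<and> ent R (tau n j r) (tau n i r) = - exp (- \<i> * complex_of_real \<alpha>) * complex_of_real (sin \<phi>)
       \<and> ent R (tau n j r) (tau n j r) = complex_of_real (cos \<phi>))"
proof -
  note ij = assms(2-4)
  have inj: "inj_on (case_prod (tau n)) (\<Union>(jacobi_blocks n i j))"
    using bij_betw_imp_inj_on[OF bij_betw_tau] jacobi_blocks_subset_offdiag[OF ij] by (rule inj_on_subset)
  have B: "B = (`) (case_prod (tau n)) ` jacobi_blocks n i j"
    unfolding B_def jacobi_blocks_def Setcompr_eq_image image_Un image_image by simp
  have R_ent: "ent R (tau n s t) (tau n a b) = jacobi_coeff i j U (s, t) (a, b)"
    if "(s, t) \<in> offdiag n" "(a, b) \<in> offdiag n" for s t a b
    using ent_jacobi_annihilator_rot[OF that] by (simp add: R_def U_def)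
  have "R \<in> carrier_mat (2 * Nn n) (2 * Nn n)"
    unfolding R_def U_def by (simp add: jacobi_annihilator_rot_eq_jacobi_mat jacobi_mat_carrier)
  moreover have "card B = 2 * n - 2"
    unfolding B using card_image[OF inj_on_image[OF inj]] card_jacobi_blocks[OF ij] by simp
  moreover have "pairwise disjnt B"
    unfolding B using disjoint_image[OF inj pairwise_disjnt_jacobi_blocks] ij by simp
  moreover have "\<forall>b \<in> B. b \<subseteq> {1..2 * Nn n}"
    unfolding B using bij_betw_tau[of n] jacobi_blocks_subset_offdiag[OF ij]
    by (auto simp: bij_betw_def)
  moreover have "\<forall>a \<in> {1..2 * Nn n}. \<forall>c \<in> {1..2 * Nn n}.
      (\<forall>b \<in> B. (a, c) \<notin> b \<times> b) \<longrightarrow> ent R a c = (if a = c then 1 else 0)"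
  proof (intro ballI impI)
    fix a c
    assume "a \<in> {1..2 * Nn n}" "c \<in> {1..2 * Nn n}" "\<forall>b \<in> B. (a, c) \<notin> b \<times> b"
    then show "ent R a c = (if a = c then 1 else 0)"
      unfolding B R_def U_def by (rule ent_jacobi_annihilator_rot_outside_blocks)
  qed
  ultimately show ?thesis
    using ij by (simp add: R_ent offdiag_def U_def jacobi_coeff_pivot
        jacobi_coeff_rot_row_pair jacobi_coeff_rot_column_pair)
qed

end
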